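(* For all $n\ge 0$, $|F_n(321,1423,2143)|=\binom{n}{2}+1$.
   Context: A permutation $\pi$ avoids a classical pattern $p\in S_k$ if no subsequence of $\pi$ of length $k$ is order-isomorphic to $p$. A Fishburn permutation is a permutation $\pi=\pi_1\cdots\pi_n$ of $[n]$ for which there are no indices $i<j$ with $\pi_j<\pi_i<\pi_{i+1}$ and $\pi_i=\pi_j+1$. $F_n(\sigma_1,\dots,\sigma_k)$ denotes the set of Fishburn permutations of length $n$ avoiding each of the classical patterns $\sigma_1,\dots,\sigma_k$ (with $F_0$ containing only the empty permutation). *)

theory Defs
  imports "HOL-Combinatorics.Multiset_Permutations"
begin

text \<open>Permutations are lists; s ! i is the (i+1)-th entry (0-based indices).\<close>

definition contains_pattern :: "nat list \<Rightarrow> nat list \<Rightarrow> bool" where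
  "contains_pattern s p \<longleftrightarrow>
     (\<exists>is :: nat list. length is = length p \<and> sorted_wrt (<) is \<and>
        (\<forall>a \<in> set is. a < length s) \<and>
        (\<forall>a < length p. \<forall>b < length p.
            (s ! (is ! a) < s ! (is ! b) \<longleftrightarrow> p ! a < p ! b)))"

definition avoids :: "nat list \<Rightarrow> nat list \<Rightarrow> bool" where
  "avoids s p \<longleftrightarrow> \<not> contains_pattern s p"

definition fishburn :: "nat list \<Rightarrow> bool" where
  "fishburn s \<longleftrightarrow>
     \<not> (\<exists>i j. i < j \<and> j < length s \<and> Suc i < length s \<and>
            s ! j < s ! i \<and> s ! i < s ! Suc i \<and> s ! i = s ! j + 1)"

definition F_set :: "nat \<Rightarrow> nat list list \<Rightarrow> nat list set" where
  "F_set n pats = {s \<in> permutations_of_set {1..n}. fishburn s \<and> (\<forall>p \<in> set pats. avoids s p)}"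

end

theory Submission
  imports Defs
begin

text \<open>A permutation in $F_{m+1}(321,1423,2143)$ either ends with its maximum $m+1$, and deleting
  that entry is a bijection onto $F_m(321,1423,2143)$, or its maximum stands first or second to
  last; in the latter case the three patterns and the Fishburn condition determine the permutation
  from its last entry, leaving exactly $m$ possibilities. Hence $|F_{m+1}| = |F_m| + m$, and the
  formula follows by induction.\<close>

lemma nth_image_segment:
  assumes "distinct u" "hi \<le> length u"
  shows "(!) u ` {lo..<hi} = set u - (!) u ` ({..<length u} - {lo..<hi})"
proof -
  have "(!) u ` ({..<length u} - ({..<length u} - {lo..<hi})) =
      (!) u ` {..<length u} - (!) u ` ({..<length u} - {lo..<hi})"
    by (rule inj_on_image_set_diff[OF inj_on_nth[OF assms(1), of "{..<length u}"]]) auto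
  moreover have "{..<length u} - ({..<length u} - {lo..<hi}) = {lo..<hi}"
    using assms(2) by auto
  moreover have "(!) u ` {..<length u} = set u"
    by (auto simp: in_set_conv_nth)
  ultimately show ?thesis by simp
qed

lemma distinct_eq_if_increasing_on_segment:
  fixes s t :: "'a::linorder list"
  assumes "distinct s" "distinct t" "set s = set t" "length s = length t" "hi \<le> length s"
    and agree: "\<And>i. i < length s \<Longrightarrow> i \<notin> {lo..<hi} \<Longrightarrow> s!i = t!i"
    and inc_s: "\<And>i j. lo \<le> i \<Longrightarrow> i < j \<Longrightarrow> j < hi \<Longrightarrow> s!i < s!j"
    and inc_t: "\<And>i j. lo \<le> i \<Longrightarrow> i < j \<Longrightarrow> j < hi \<Longrightarrow> t!i < t!j"
  shows "s = t"
proof -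
  have "(!) s ` ({..<length s} - {lo..<hi}) = (!) t ` ({..<length s} - {lo..<hi})"
    using agree by (intro image_cong) auto
  then have "set (map ((!) s) [lo..<hi]) = set (map ((!) t) [lo..<hi])"
    using assms(1-5) by (simp add: nth_image_segment)
  moreover have "sorted_wrt (<) (map ((!) s) [lo..<hi])" "sorted_wrt (<) (map ((!) t) [lo..<hi])"
    using inc_s inc_t by (auto simp: sorted_wrt_iff_nth_less)
  ultimately have "map ((!) s) [lo..<hi] = map ((!) t) [lo..<hi]"
    by (intro sorted_distinct_set_unique) (auto simp: strict_sorted_iff)
  then have "s!i = t!i" if "i \<in> {lo..<hi}" for i
    using that by (auto simp: map_equality_iff)
  with agree show ?thesis
    using assms(4,5) by (metis nth_equalityI)
qed

lemma contains_pattern_3_iff: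
  "contains_pattern s [a, b, c] \<longleftrightarrow>
     (\<exists>x y z. x < y \<and> y < z \<and> z < length s \<and>
        (s!x < s!y \<longleftrightarrow> a < b) \<and> (s!y < s!x \<longleftrightarrow> b < a) \<and>
        (s!x < s!z \<longleftrightarrow> a < c) \<and> (s!z < s!x \<longleftrightarrow> c < a) \<and>
        (s!y < s!z \<longleftrightarrow> b < c) \<and> (s!z < s!y \<longleftrightarrow> c < b))"
  (is "_ \<longleftrightarrow> (\<exists>x y z. ?P x y z)")
proof
  assume "contains_pattern s [a, b, c]"
  then obtain "is" where "is": "length is = length [a, b, c]" "sorted_wrt (<) is"
    "\<forall>i\<in>set is. i < length s"
    "\<forall>i<length [a, b, c]. \<forall>j<length [a, b, c].
       s ! (is ! i) < s ! (is ! j) \<longleftrightarrow> [a, b, c] ! i < [a, b, c] ! j"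
    unfolding contains_pattern_def by blast
  from "is"(1) obtain x y z where "is = [x, y, z]"
    by (auto simp: length_Suc_conv)
  with "is" show "\<exists>x y z. ?P x y z"
    by (intro exI[of _ x] exI[of _ y] exI[of _ z]) (simp add: All_less_Suc2)
next
  assume "\<exists>x y z. ?P x y z"
  then obtain x y z where "?P x y z" by (elim exE)
  then show "contains_pattern s [a, b, c]"
    unfolding contains_pattern_def
    by (intro exI[of _ "[x, y, z]"]) (simp add: All_less_Suc2)
qed

lemma contains_321_iff:
  "contains_pattern s [3, 2, 1] \<longleftrightarrow>
     (\<exists>i j k. i < j \<and> j < k \<and> k < length s \<and> s!k < s!j \<and> s!j < s!i)"
  unfolding contains_pattern_3_iff
  by (intro ex_cong1 iffI) (auto simp: not_less_iff_gr_or_eq dest: less_trans)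

lemma contains_pattern_4_iff:
  "contains_pattern s [a, b, c, d] \<longleftrightarrow>
     (\<exists>x y z w. x < y \<and> y < z \<and> z < w \<and> w < length s \<and>
        (s!x < s!y \<longleftrightarrow> a < b) \<and> (s!y < s!x \<longleftrightarrow> b < a) \<and>
        (s!x < s!z \<longleftrightarrow> a < c) \<and> (s!z < s!x \<longleftrightarrow> c < a) \<and>
        (s!x < s!w \<longleftrightarrow> a < d) \<and> (s!w < s!x \<longleftrightarrow> d < a) \<and>
        (s!y < s!z \<longleftrightarrow> b < c) \<and> (s!z < s!y \<longleftrightarrow> c < b) \<and>
        (s!y < s!w \<longleftrightarrow> b < d) \<and> (s!w < s!y \<longleftrightarrow> d < b) \<and>
        (s!z < s!w \<longleftrightarrow> c < d) \<and> (s!w < s!z \<longleftrightarrow> d < c))"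
  (is "_ \<longleftrightarrow> (\<exists>x y z w. ?P x y z w)")
proof
  assume "contains_pattern s [a, b, c, d]"
  then obtain "is" where "is": "length is = length [a, b, c, d]" "sorted_wrt (<) is"
    "\<forall>i\<in>set is. i < length s"
    "\<forall>i<length [a, b, c, d]. \<forall>j<length [a, b, c, d].
       s ! (is ! i) < s ! (is ! j) \<longleftrightarrow> [a, b, c, d] ! i < [a, b, c, d] ! j"
    unfolding contains_pattern_def by blast
  from "is"(1) obtain x y z w where "is = [x, y, z, w]"
    by (auto simp: length_Suc_conv)
  with "is" show "\<exists>x y z w. ?P x y z w"
    by (intro exI[of _ x] exI[of _ y] exI[of _ z] exI[of _ w]) (simp add: All_less_Suc2)
next
  assume "\<exists>x y z w. ?P x y z w"
  then obtain x y z w where "?P x y z w" by (elim exE)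
  then show "contains_pattern s [a, b, c, d]"
    unfolding contains_pattern_def
    by (intro exI[of _ "[x, y, z, w]"]) (simp add: All_less_Suc2)
qed

lemma contains_1423_iff:
  "contains_pattern s [1, 4, 2, 3] \<longleftrightarrow>
     (\<exists>i j k l. i < j \<and> j < k \<and> k < l \<and> l < length s \<and> s!i < s!k \<and> s!k < s!l \<and> s!l < s!j)"
  unfolding contains_pattern_4_iff
  by (intro ex_cong1 iffI) (auto simp: not_less_iff_gr_or_eq dest: less_trans)

lemma contains_2143_iff:
  "contains_pattern s [2, 1, 4, 3] \<longleftrightarrow>
     (\<exists>i j k l. i < j \<and> j < k \<and> k < l \<and> l < length s \<and> s!j < s!i \<and> s!i < s!l \<and> s!l < s!k)"
  unfolding contains_pattern_4_iff
  by (intro ex_cong1 iffI) (auto simp: not_less_iff_gr_or_eq dest: less_trans)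

lemma contains_pattern_append:
  assumes "contains_pattern xs p"
  shows "contains_pattern (xs @ ys) p"
proof -
  obtain "is" where "is": "length is = length p" "sorted_wrt (<) is" "\<forall>i\<in>set is. i < length xs"
    "\<forall>a<length p. \<forall>b<length p. xs ! (is ! a) < xs ! (is ! b) \<longleftrightarrow> p ! a < p ! b"
    using assms unfolding contains_pattern_def by blast
  then have "\<forall>i\<in>set is. i < length (xs @ ys)"
    "\<forall>a<length p. \<forall>b<length p. (xs @ ys) ! (is ! a) < (xs @ ys) ! (is ! b) \<longleftrightarrow> p ! a < p ! b"
    by (auto simp: nth_append)
  with "is"(1,2) show ?thesis
    unfolding contains_pattern_def by blast
qed

lemma contains_pattern_snoc_max:
  assumes "contains_pattern (xs @ [M]) p" and below: "\<forall>v\<in>set xs. v < M"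
    and "\<exists>x\<in>set p. last p < x"
  shows "contains_pattern xs p"
proof -
  obtain "is" where "is": "length is = length p" "sorted_wrt (<) is"
    "\<forall>i\<in>set is. i < Suc (length xs)"
    "\<forall>a<length p. \<forall>b<length p. (xs @ [M]) ! (is ! a) < (xs @ [M]) ! (is ! b) \<longleftrightarrow> p ! a < p ! b"
    using assms(1) unfolding contains_pattern_def by auto
  obtain a where a: "a < length p" "last p < p ! a"
    using assms(3) by (auto simp: in_set_conv_nth)
  define L where "L = length p - 1"
  have "L < length p" "last p = p ! L"
    using a(1) unfolding L_def by (cases p; simp add: last_conv_nth)+
  with a have "a \<noteq> L" by auto
  with a(1) have "a < L"
    unfolding L_def by arith
  have "is ! L < length xs"
  proof (rule ccontr)
    assume "\<not> is ! L < length xs"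
    with "is" \<open>L < length p\<close> have "is ! L = length xs" by (auto simp: less_Suc_eq)
    moreover have "is ! a < is ! L"
      using "is"(1,2) \<open>a < L\<close> \<open>L < length p\<close> by (simp add: sorted_wrt_iff_nth_less)
    ultimately have "(xs @ [M]) ! (is ! a) < (xs @ [M]) ! (is ! L)"
      using below by (simp add: nth_append)
    with "is"(4) a \<open>a < L\<close> \<open>L < length p\<close> \<open>last p = p ! L\<close> show False
      by auto
  qed
  have "is ! k < length xs" if "k < length p" for k
  proof (cases "k = L")
    case False
    with that have "k < L" unfolding L_def by auto
    with "is"(1,2) \<open>L < length p\<close> have "is ! k < is ! L"
      by (simp add: sorted_wrt_iff_nth_less)
    with \<open>is ! L < length xs\<close> show ?thesis by simp
  qed (use \<open>is ! L < length xs\<close> in simp)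
  then have "\<forall>i\<in>set is. i < length xs"
    using "is"(1) by (auto simp: in_set_conv_nth)
  with "is" show ?thesis
    unfolding contains_pattern_def by (intro exI[of _ "is"]) (auto simp: nth_append)
qed

lemma fishburn_iff:
  "fishburn s \<longleftrightarrow> (\<forall>i j. i < j \<longrightarrow> j < length s \<longrightarrow> s!i = Suc (s!j) \<longrightarrow> \<not> s!i < s!Suc i)"
  unfolding fishburn_def
proof (intro iffI allI impI notI)
  fix i j
  assume none: "\<not> (\<exists>i j. i < j \<and> j < length s \<and> Suc i < length s \<and>
    s ! j < s ! i \<and> s ! i < s ! Suc i \<and> s ! i = s ! j + 1)"
    and "i < j" "j < length s" "s!i = Suc (s!j)" "s!i < s!Suc i"
  then have "i < j \<and> j < length s \<and> Suc i < length s \<and>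
    s ! j < s ! i \<and> s ! i < s ! Suc i \<and> s ! i = s ! j + 1"
    by auto
  with none show False by blast
next
  assume "\<forall>i j. i < j \<longrightarrow> j < length s \<longrightarrow> s!i = Suc (s!j) \<longrightarrow> \<not> s!i < s!Suc i"
    and "\<exists>i j. i < j \<and> j < length s \<and> Suc i < length s \<and>
      s ! j < s ! i \<and> s ! i < s ! Suc i \<and> s ! i = s ! j + 1"
  then show False by auto
qed

lemma fishburn_appendD:
  assumes "fishburn (xs @ ys)"
  shows "fishburn xs"
  unfolding fishburn_iff
proof (intro allI impI)
  fix i j assume "i < j" "j < length xs" "xs!i = Suc (xs!j)"
  with assms[unfolded fishburn_iff, rule_format, of i j] show "\<not> xs!i < xs!Suc i"
    by (simp add: nth_append)
qed

lemma fishburn_snoc_max: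
  assumes "fishburn xs" "\<forall>v\<in>set xs. v < M"
  shows "fishburn (xs @ [M])"
  unfolding fishburn_iff
proof (intro allI impI)
  fix i j assume ij: "i < j" "j < length (xs @ [M])" "(xs @ [M])!i = Suc ((xs @ [M])!j)"
  have "j \<noteq> length xs"
    using ij assms(2) nth_mem[of i xs] by (auto simp: nth_append)
  with ij have "i < j" "j < length xs" "xs!i = Suc (xs!j)" "Suc i < length xs"
    by (auto simp: nth_append)
  with assms(1)[unfolded fishburn_iff, rule_format, of i j] show "\<not> (xs @ [M])!i < (xs @ [M])!Suc i"
    by (simp add: nth_append)
qed

lemma finite_F_set: "finite (F_set n pats)"
  unfolding F_set_def by (rule finite_subset[OF Collect_subset finite_permutations_of_set])

lemma F_set_0:
  assumes "[] \<notin> set pats"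
  shows "F_set 0 pats = {[]}"
proof -
  have "\<forall>p\<in>set pats. avoids [] p"
    unfolding avoids_def
  proof (intro ballI notI)
    fix p assume "p \<in> set pats"
    assume "contains_pattern [] p"
    then obtain "is" where "length is = length p" "set is = {}"
      unfolding contains_pattern_def by auto
    with \<open>p \<in> set pats\<close> assms show False by auto
  qed
  moreover have "fishburn []"
    by (simp add: fishburn_def)
  ultimately have "[] \<in> F_set 0 pats"
    by (simp add: F_set_def)
  moreover have "F_set 0 pats \<subseteq> {[]}"
    unfolding F_set_def by (simp add: subset_iff)
  ultimately show ?thesis by blast
qed

lemma snoc_max_in_F_set:
  assumes "\<forall>p\<in>set pats. \<exists>x\<in>set p. last p < x" and "s \<in> F_set m pats"
  shows "s @ [Suc m] \<in> F_set (Suc m) pats"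
proof -
  have s: "set s = {1..m}" "distinct s" "fishburn s" "\<forall>p\<in>set pats. avoids s p"
    using assms(2) by (auto simp: F_set_def permutations_of_set_def)
  then have below: "\<forall>v\<in>set s. v < Suc m" by auto
  have "s @ [Suc m] \<in> permutations_of_set {1..Suc m}"
    using s(1,2) by (simp add: permutations_of_set_def atLeastAtMostSuc_conv)
  moreover have "\<forall>p\<in>set pats. avoids (s @ [Suc m]) p"
  proof
    fix p assume "p \<in> set pats"
    with s(4) assms(1) have "avoids s p" "\<exists>x\<in>set p. last p < x" by auto
    then show "avoids (s @ [Suc m]) p"
      using contains_pattern_snoc_max[OF _ below] unfolding avoids_def by blast
  qed
  ultimately show ?thesis
    using fishburn_snoc_max[OF s(3) below] by (simp add: F_set_def)
qed

lemma butlast_in_F_set: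
  assumes "s \<in> F_set (Suc m) pats" and "last s = Suc m"
  shows "s = butlast s @ [Suc m]" and "butlast s \<in> F_set m pats"
proof -
  have s: "set s = {1..Suc m}" "distinct s" "fishburn s" "\<forall>p\<in>set pats. avoids s p"
    using assms(1) by (auto simp: F_set_def permutations_of_set_def)
  then have "s \<noteq> []" by auto
  with assms(2) obtain t where t: "s = t @ [Suc m]"
    by (metis append_butlast_last_id)
  then show "s = butlast s @ [Suc m]" by simp
  from s(1,2) t have "distinct t" "insert (Suc m) (set t) = insert (Suc m) {1..m}" "Suc m \<notin> set t"
    by (auto simp: atLeastAtMostSuc_conv)
  then have "set t = {1..m}"
    by (subst (asm) insert_ident) auto
  moreover have "fishburn t"
    using s(3) t fishburn_appendD by blast
  moreover have "\<forall>p\<in>set pats. avoids t p"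
    using s(4) t contains_pattern_append unfolding avoids_def by blast
  ultimately show "butlast s \<in> F_set m pats"
    using \<open>distinct t\<close> t by (simp add: F_set_def permutations_of_set_def)
qed

abbreviation F321_1423_2143 :: "nat \<Rightarrow> nat list set" where
  "F321_1423_2143 n \<equiv> F_set n [[3, 2, 1], [1, 4, 2, 3], [2, 1, 4, 3]]"

text \<open>For \<open>b = 1\<close> the permutation below is $1\,2 \cdots (m-1)\,(m+1)\,m$, and for
  \<open>2 \<le> b \<le> m\<close> it is $(b+1)\,1\,2 \cdots (b-1)\,(b+2) \cdots (m+1)\,b$.\<close>

definition exceptional_entry :: "nat \<Rightarrow> nat \<Rightarrow> nat \<Rightarrow> nat" where
  "exceptional_entry m b i =
     (if b = 1 then (if Suc i = m then Suc m else if i = m then m else Suc i)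
      else if i = 0 then Suc b else if i < b then i else if i < m then i + 2 else b)"

definition exceptional_perm :: "nat \<Rightarrow> nat \<Rightarrow> nat list" where
  "exceptional_perm m b = map (exceptional_entry m b) [0..<Suc m]"

lemma length_exceptional_perm [simp]: "length (exceptional_perm m b) = Suc m"
  by (simp add: exceptional_perm_def del: upt_Suc)

lemma nth_exceptional_perm [simp]:
  "i < Suc m \<Longrightarrow> exceptional_perm m b ! i = exceptional_entry m b i"
  by (simp add: exceptional_perm_def del: upt_Suc)

lemma exceptional_perm_avoids_321:
  "b \<in> {1..m} \<Longrightarrow> avoids (exceptional_perm m b) [3, 2, 1]"
  unfolding avoids_def contains_321_iff
  by (auto simp: exceptional_entry_def split: if_splits)

lemma exceptional_perm_avoids_1423:
  "b \<in> {1..m} \<Longrightarrow> avoids (exceptional_perm m b) [1, 4, 2, 3]"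
  unfolding avoids_def contains_1423_iff
  by (auto simp: exceptional_entry_def split: if_splits)

lemma exceptional_perm_avoids_2143:
  "b \<in> {1..m} \<Longrightarrow> avoids (exceptional_perm m b) [2, 1, 4, 3]"
  unfolding avoids_def contains_2143_iff
  by (auto simp: exceptional_entry_def split: if_splits)

lemma exceptional_perm_fishburn: "b \<in> {1..m} \<Longrightarrow> fishburn (exceptional_perm m b)"
  unfolding fishburn_def by (auto simp: exceptional_entry_def split: if_splits)

lemma exceptional_perm_permutation:
  assumes "b \<in> {1..m}"
  shows "exceptional_perm m b \<in> permutations_of_set {1..Suc m}"
proof -
  have inj: "inj_on (exceptional_entry m b) {0..<Suc m}"
    using assms unfolding inj_on_def exceptional_entry_def by (auto split: if_splits)
  moreover have "exceptional_entry m b ` {0..<Suc m} \<subseteq> {1..Suc m}"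
    using assms unfolding exceptional_entry_def by (auto split: if_splits)
  then have "exceptional_entry m b ` {0..<Suc m} = {1..Suc m}"
    using card_image[OF inj] by (intro card_seteq) auto
  ultimately show ?thesis
    by (simp add: permutations_of_set_def exceptional_perm_def distinct_map del: upt_Suc)
qed

lemma exceptional_perm_in_F321_1423_2143:
  "b \<in> {1..m} \<Longrightarrow> exceptional_perm m b \<in> F321_1423_2143 (Suc m)"
  using exceptional_perm_permutation exceptional_perm_fishburn
    exceptional_perm_avoids_321 exceptional_perm_avoids_1423 exceptional_perm_avoids_2143
  unfolding F_set_def by simp

lemma last_exceptional_perm: "b \<in> {1..m} \<Longrightarrow> last (exceptional_perm m b) \<noteq> Suc m"
  using last_conv_nth[of "exceptional_perm m b"]
  by (auto simp: exceptional_entry_def simp flip: length_greater_0_conv)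

lemma inj_on_exceptional_perm: "inj_on (exceptional_perm m) {1..m}"
proof
  fix b b' assume "b \<in> {1..m}" "b' \<in> {1..m}" "exceptional_perm m b = exceptional_perm m b'"
  moreover from this(3) have
    "exceptional_entry m b 0 = exceptional_entry m b' 0" "exceptional_entry m b m = exceptional_entry m b' m"
    by (metis nth_exceptional_perm zero_less_Suc, metis nth_exceptional_perm lessI)
  ultimately show "b = b'" by (auto simp: exceptional_entry_def split: if_splits)
qed

locale F321_1423_2143_member =
  fixes m :: nat and s :: "nat list"
  assumes member: "s \<in> F321_1423_2143 (Suc m)"
begin

lemma distinct_s: "distinct s" and set_s: "set s = {1..Suc m}" and fishburn_s: "fishburn s"
  and avoids_321: "avoids s [3, 2, 1]" and avoids_1423: "avoids s [1, 4, 2, 3]"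
  and avoids_2143: "avoids s [2, 1, 4, 3]"
  using member by (auto simp: F_set_def permutations_of_set_def)

lemma length_eq: "length s = Suc m"
  using distinct_card[OF distinct_s] by (simp add: set_s)

lemma nth_range: "i < Suc m \<Longrightarrow> s!i \<in> {1..Suc m}"
  using length_eq set_s nth_mem by fastforce

lemma nth_eq_iff: "i < Suc m \<Longrightarrow> j < Suc m \<Longrightarrow> s!i = s!j \<longleftrightarrow> i = j"
  using distinct_s length_eq by (simp add: nth_eq_iff_index_eq)

lemma index_exists: "v \<in> {1..Suc m} \<Longrightarrow> \<exists>i<Suc m. s!i = v"
  using set_s length_eq by (metis in_set_conv_nth)

lemma less_if_not_greater: "i < Suc m \<Longrightarrow> j < Suc m \<Longrightarrow> i \<noteq> j \<Longrightarrow> \<not> s!j < s!i \<Longrightarrow> s!i < s!j"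
  using nth_eq_iff by (metis linorder_neqE_nat)

lemma no_321:
  assumes "i < j" "j < k" "k < Suc m"
  shows "\<not> (s!k < s!j \<and> s!j < s!i)"
proof
  assume "s!k < s!j \<and> s!j < s!i"
  with assms length_eq have "contains_pattern s [3, 2, 1]"
    unfolding contains_321_iff by (intro exI[of _ i] exI[of _ j] exI[of _ k]) simp
  with avoids_321 show False by (simp add: avoids_def)
qed

lemma no_1423:
  assumes "i < j" "j < k" "k < l" "l < Suc m"
  shows "\<not> (s!i < s!k \<and> s!k < s!l \<and> s!l < s!j)"
proof
  assume "s!i < s!k \<and> s!k < s!l \<and> s!l < s!j"
  with assms length_eq have "contains_pattern s [1, 4, 2, 3]"
    unfolding contains_1423_iff by (intro exI[of _ i] exI[of _ j] exI[of _ k] exI[of _ l]) simp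
  with avoids_1423 show False by (simp add: avoids_def)
qed

lemma no_2143:
  assumes "i < j" "j < k" "k < l" "l < Suc m"
  shows "\<not> (s!j < s!i \<and> s!i < s!l \<and> s!l < s!k)"
proof
  assume "s!j < s!i \<and> s!i < s!l \<and> s!l < s!k"
  with assms length_eq have "contains_pattern s [2, 1, 4, 3]"
    unfolding contains_2143_iff by (intro exI[of _ i] exI[of _ j] exI[of _ k] exI[of _ l]) simp
  with avoids_2143 show False by (simp add: avoids_def)
qed

lemma no_fishburn_ascent: "i < j \<Longrightarrow> j < Suc m \<Longrightarrow> s!i = Suc (s!j) \<Longrightarrow> \<not> s!i < s!Suc i"
  using fishburn_s length_eq unfolding fishburn_iff by simp

lemma less_max:
  "s!p = Suc m \<Longrightarrow> p < Suc m \<Longrightarrow> i < Suc m \<Longrightarrow> i \<noteq> p \<Longrightarrow> s!i < Suc m"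
  using nth_range[of i] nth_eq_iff[of i p] by fastforce

lemma increasing_after_max:
  assumes "s!p = Suc m" "p < i" "i < j" "j < Suc m"
  shows "s!i < s!j"
  using assms less_max[of p i] no_321[of p i j] by (intro less_if_not_greater) auto

lemma max_first_or_penultimate:
  assumes max: "s!p = Suc m" and "0 < p" "p < m"
  shows "Suc p = m"
proof (rule ccontr)
  txt \<open>Otherwise the maximum has two successors, which rise by 321-avoidance; 1423-avoidance then puts
    every entry before the maximum above its first successor, 321-avoidance makes these entries
    increase, so the value $s_0 - 1$ occurs after the maximum and $s_0$ is a forbidden Fishburn ascent.\<close>
  assume "Suc p \<noteq> m"
  with assms have p2: "Suc (Suc p) < Suc m" by auto
  have asc: "s!Suc p < s!Suc (Suc p)"
    using increasing_after_max[OF max] p2 by auto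
  have above_next: "s!Suc p < s!x" if "x < p" for x
    using that p2 asc no_1423[of x p "Suc p" "Suc (Suc p)"] less_max[OF max, of "Suc (Suc p)"] max
    by (intro less_if_not_greater) auto
  have increasing_before: "s!x < s!y" if "x < y" "y < p" for x y
    using that p2 above_next[of y] no_321[of x y "Suc p"] by (intro less_if_not_greater) auto
  define c where "c = s!0"
  have "s!Suc p < c" "1 \<le> s!Suc p" "c \<le> Suc m"
    using above_next[of 0] nth_range[of "Suc p"] nth_range[of 0] p2 assms(2) c_def by auto
  then have "c - 1 \<in> {1..Suc m}" by auto
  then obtain j where j: "j < Suc m" "s!j = c - 1"
    using index_exists by blast
  have "p < j"
  proof (rule ccontr)
    assume "\<not> p < j"
    moreover have "j \<noteq> 0"
    proof
      assume "j = 0"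
      with j c_def have "c = c - 1" by simp
      with \<open>s!Suc p < c\<close> show False by simp
    qed
    moreover have "j \<noteq> p"
      using j max \<open>c \<le> Suc m\<close> by auto
    ultimately have "c < s!j"
      using increasing_before[of 0 j] c_def by auto
    with j show False by simp
  qed
  moreover have "s!0 < s!Suc 0"
    using increasing_before[of 0 1] max less_max[OF max, of 0] assms(2,3)
    by (cases "p = 1") auto
  ultimately show False
    using no_fishburn_ascent[of 0 j] j \<open>s!Suc p < c\<close> c_def by auto
qed

lemma first_is_succ_of_last:
  assumes max: "s!p = Suc m" and pen: "Suc p = m" and small: "s!m < m"
  shows "s!0 = Suc (s!m)" "1 < p" "s!1 < s!m"
proof -
  txt \<open>The Fishburn condition forces a descent right after the entry $s_m + 1$. It stands first:
    an earlier first entry would either exceed it (a 321 ending in $s_m$) or lie below $s_m$, hence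
    by 2143-avoidance below the entry after the descent, giving a 1423.\<close>
  obtain q where q: "q < Suc m" "s!q = Suc (s!m)"
    using index_exists[of "Suc (s!m)"] nth_range[of m] small by auto
  have "q \<noteq> m" "q \<noteq> p"
    using q max small by auto
  with q pen have "q < p" by auto
  have desc: "s!Suc q < s!q"
    using no_fishburn_ascent[of q m] q \<open>q < p\<close> pen by (intro less_if_not_greater) auto
  have "Suc q \<noteq> p" "Suc q \<noteq> m"
    using desc q max small nth_eq_iff[of "Suc q" m] \<open>q < p\<close> pen by auto
  with \<open>q < p\<close> pen have "Suc q < p" by auto
  have next_small: "s!Suc q < s!m"
    using desc q \<open>Suc q \<noteq> m\<close> nth_eq_iff[of "Suc q" m] \<open>Suc q < p\<close> pen by auto
  have "q = 0"
  proof (rule ccontr)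
    assume "q \<noteq> 0"
    have "s!0 \<noteq> s!m" "s!0 \<noteq> s!q"
      using nth_eq_iff[of 0 m] nth_eq_iff[of 0 q] \<open>q \<noteq> 0\<close> q pen by auto
    moreover have "\<not> s!q < s!0"
      using no_321[of 0 q m] \<open>q \<noteq> 0\<close> \<open>q < p\<close> q pen by auto
    ultimately have "s!0 < s!m"
      using q by auto
    then have "s!0 < s!Suc q"
      using no_2143[of 0 "Suc q" p m] next_small max less_max[OF max, of m] \<open>Suc q < p\<close> pen
      by (intro less_if_not_greater) auto
    then show False
      using no_1423[of 0 q "Suc q" m] next_small q \<open>q \<noteq> 0\<close> \<open>Suc q < p\<close> pen by auto
  qed
  with q \<open>Suc q < p\<close> next_small show "s!0 = Suc (s!m)" "1 < p" "s!1 < s!m" by auto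
qed

lemma increasing_between:
  assumes max: "s!p = Suc m" and pen: "Suc p = m" and small: "s!m < m"
    and ij: "0 < i" "i < j" "j < p"
  shows "s!i < s!j"
proof -
  note first = first_is_succ_of_last[OF max pen small]
  have split: "s!k < s!m \<or> Suc (s!m) < s!k" if "0 < k" "k < p" for k
  proof -
    have "s!k \<noteq> s!m" "s!k \<noteq> Suc (s!m)"
      using that pen first(1) nth_eq_iff[of k m] nth_eq_iff[of k 0] by auto
    then show ?thesis by linarith
  qed
  have small_increasing: "s!x < s!y" if "x < y" "y < p" "s!x < s!m" for x y
    using that no_2143[of x y p m] max less_max[OF max, of m] pen
    by (intro less_if_not_greater) auto
  have large_increasing: "s!x < s!y" if "x < y" "y < m" "s!m < s!y" for x y
    using that no_321[of x y m] by (intro less_if_not_greater) auto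
  show ?thesis
  proof (cases "s!i < s!m")
    case True
    show ?thesis
    proof (cases "s!j < s!m")
      case True
      with \<open>s!i < s!m\<close> ij small_increasing[of i j] show ?thesis by blast
    next
      case False
      with \<open>s!i < s!m\<close> split[of j] ij show ?thesis by auto
    qed
  next
    case False
    with split[of i] ij have large: "Suc (s!m) < s!i" by auto
    with first(3) have "1 < i"
      using ij(1) by (cases "i = 1") auto
    have "\<not> s!j < s!m"
    proof
      assume "s!j < s!m"
      moreover from this have "s!1 < s!j"
        using small_increasing[of 1 j] \<open>1 < i\<close> ij first(3) by auto
      ultimately show False
        using no_1423[of 1 i j m] large \<open>1 < i\<close> ij pen by auto
    qed
    with split[of j] large_increasing[of i j] ij pen show ?thesis by auto
  qed
qed

lemma eq_exceptional_permI:
  assumes "b \<in> {1..m}" "hi \<le> Suc m"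
    and "\<And>i. i < Suc m \<Longrightarrow> i \<notin> {lo..<hi} \<Longrightarrow> s!i = exceptional_entry m b i"
    and "\<And>i j. lo \<le> i \<Longrightarrow> i < j \<Longrightarrow> j < hi \<Longrightarrow> s!i < s!j"
    and "\<And>i j. lo \<le> i \<Longrightarrow> i < j \<Longrightarrow> j < hi \<Longrightarrow> exceptional_entry m b i < exceptional_entry m b j"
  shows "s = exceptional_perm m b"
  using exceptional_perm_permutation[OF assms(1)] distinct_s set_s length_eq assms(2-)
  by (intro distinct_eq_if_increasing_on_segment[where lo = lo and hi = hi])
    (auto simp: permutations_of_set_def)

lemma eq_exceptional_perm_if_max_first:
  assumes "s!0 = Suc m" "0 < m"
  shows "s = exceptional_perm m m"
proof (rule eq_exceptional_permI[where lo = 1 and hi = "Suc m"])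
  show "s!i = exceptional_entry m m i" if "i < Suc m" "i \<notin> {1..<Suc m}" for i
  proof -
    from that have "i = 0" by auto
    with assms show ?thesis by (simp add: exceptional_entry_def)
  qed
  show "s!i < s!j" if "1 \<le> i" "i < j" "j < Suc m" for i j
    using increasing_after_max[OF assms(1)] that by auto
qed (use assms(2) in \<open>auto simp: exceptional_entry_def\<close>)

lemma eq_exceptional_perm_if_last_is_m:
  assumes max: "s!p = Suc m" and pen: "Suc p = m" and "s!m = m"
  shows "s = exceptional_perm m 1"
proof (rule eq_exceptional_permI[where lo = 0 and hi = p])
  show "s!i = exceptional_entry m 1 i" if "i < Suc m" "i \<notin> {0..<p}" for i
  proof -
    from that pen have "i = p \<or> i = m" by auto
    with assms show ?thesis by (auto simp: exceptional_entry_def)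
  qed
  show "s!i < s!j" if "0 \<le> i" "i < j" "j < p" for i j
    using that no_2143[of i j p m] assms less_max[OF max, of i] nth_eq_iff[of i m]
    by (intro less_if_not_greater) auto
qed (use pen in \<open>auto simp: exceptional_entry_def\<close>)

lemma eq_exceptional_perm_if_last_less_m:
  assumes max: "s!p = Suc m" and pen: "Suc p = m" and small: "s!m < m"
  shows "s = exceptional_perm m (s!m)"
proof -
  note first = first_is_succ_of_last[OF max pen small]
  have "2 \<le> s!m"
    using first(3) nth_range[of 1] pen by auto
  show ?thesis
  proof (rule eq_exceptional_permI[where lo = 1 and hi = p])
    show "s!i = exceptional_entry m (s!m) i" if "i < Suc m" "i \<notin> {1..<p}" for i
    proof -
      from that pen have "i = 0 \<or> i = p \<or> i = m" by auto
      with max pen small first(1) \<open>2 \<le> s!m\<close> show ?thesis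
        by (auto simp: exceptional_entry_def)
    qed
    show "s!i < s!j" if "1 \<le> i" "i < j" "j < p" for i j
      using increasing_between[OF max pen small] that by auto
  qed (use pen small \<open>2 \<le> s!m\<close> in \<open>auto simp: exceptional_entry_def\<close>)
qed

lemma eq_exceptional_perm:
  assumes "last s \<noteq> Suc m"
  shows "\<exists>b\<in>{1..m}. s = exceptional_perm m b"
proof -
  obtain p where p: "p < Suc m" "s!p = Suc m"
    using index_exists[of "Suc m"] by auto
  have "last s = s!m"
    using length_eq by (simp add: last_conv_nth flip: length_greater_0_conv)
  with assms p have "p < m" by (cases "p = m") auto
  show ?thesis
  proof (cases "p = 0")
    case True
    with p \<open>p < m\<close> eq_exceptional_perm_if_max_first show ?thesis by auto
  next
    case False
    with p(2) \<open>p < m\<close> have pen: "Suc p = m"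
      by (intro max_first_or_penultimate) auto
    have "s!m \<in> {1..m}"
      using nth_range[of m] less_max[OF p(2) p(1), of m] pen by auto
    with p(2) pen eq_exceptional_perm_if_last_is_m eq_exceptional_perm_if_last_less_m
    show ?thesis
      by (cases "s!m = m") auto
  qed
qed

end

lemma F321_1423_2143_Suc:
  "F321_1423_2143 (Suc m) =
     (\<lambda>s. s @ [Suc m]) ` F321_1423_2143 m \<union> exceptional_perm m ` {1..m}"
proof (intro equalityI subsetI)
  fix s assume s: "s \<in> F321_1423_2143 (Suc m)"
  show "s \<in> (\<lambda>s. s @ [Suc m]) ` F321_1423_2143 m \<union> exceptional_perm m ` {1..m}"
  proof (cases "last s = Suc m")
    case True
    with butlast_in_F_set[OF s] show ?thesis by blast
  next
    case False
    interpret F321_1423_2143_member m s by unfold_locales (rule s)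
    from eq_exceptional_perm[OF False] show ?thesis by blast
  qed
next
  fix s assume "s \<in> (\<lambda>s. s @ [Suc m]) ` F321_1423_2143 m \<union> exceptional_perm m ` {1..m}"
  moreover have "\<forall>p\<in>set [[3, 2, 1], [1, 4, 2, 3], [2, 1, 4, 3]]. \<exists>x\<in>set p. last p < (x :: nat)"
    by simp
  ultimately show "s \<in> F321_1423_2143 (Suc m)"
    using snoc_max_in_F_set exceptional_perm_in_F321_1423_2143 by auto
qed

lemma card_F321_1423_2143_Suc:
  "card (F321_1423_2143 (Suc m)) = card (F321_1423_2143 m) + m"
proof -
  have "\<forall>s\<in>(\<lambda>s. s @ [Suc m]) ` F321_1423_2143 m. last s = Suc m"
    by auto
  moreover have "\<forall>s\<in>exceptional_perm m ` {1..m}. last s \<noteq> Suc m"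
    using last_exceptional_perm by auto
  ultimately have "(\<lambda>s. s @ [Suc m]) ` F321_1423_2143 m \<inter> exceptional_perm m ` {1..m} = {}"
    by blast
  moreover have "card ((\<lambda>s. s @ [Suc m]) ` F321_1423_2143 m) = card (F321_1423_2143 m)"
    by (rule card_image) (rule inj_onI, simp)
  moreover have "card (exceptional_perm m ` {1..m}) = m"
    using card_image[OF inj_on_exceptional_perm] by simp
  ultimately show ?thesis
    unfolding F321_1423_2143_Suc by (simp add: card_Un_disjoint finite_F_set)
qed

theorem mainTheorem9:
  fixes n :: nat
  shows "card (F_set n [[3,2,1], [1,4,2,3], [2,1,4,3]]) = (n choose 2) + 1"
proof (induction n)
  case 0
  show ?case by (simp add: F_set_0)
next
  case (Suc m)
  have "Suc m choose 2 = (m choose 2) + m"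
    by (simp add: numeral_2_eq_2)
  with Suc.IH card_F321_1423_2143_Suc[of m] show ?case
    by simp
qed

end
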